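(* Let $F=F(N,\mathcal D)$ be a GSC. Then $F$ is connected if and only if $Q_3$ is connected.
   Context: GSC: $N\ge2$, $\mathcal D\subset\{0,\dots,N-1\}^2$ with $1<|\mathcal D|<N^2$, $\varphi_i(x)=\frac1N(x+i)$, $F$ the attractor $F=\bigcup_{i\in\mathcal D}\varphi_i(F)$. $Q_0=[0,1]^2$ and $Q_n=\bigcup_{i\in\mathcal D}\varphi_i(Q_{n-1})$ for $n\ge1$. *)

theory Defs
  imports "HOL-Analysis.Analysis"
begin

definition gsc_map :: "nat \<Rightarrow> nat \<times> nat \<Rightarrow> real \<times> real \<Rightarrow> real \<times> real" where
  "gsc_map N i x = ((fst x + real (fst i)) / real N, (snd x + real (snd i)) / real N)"

definition gsc_data :: "nat \<Rightarrow> (nat \<times> nat) set \<Rightarrow> bool" where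
  "gsc_data N D \<longleftrightarrow> 2 \<le> N \<and> D \<subseteq> {0..<N} \<times> {0..<N} \<and> 1 < card D \<and> card D < N^2"

fun gsc_Q :: "nat \<Rightarrow> (nat \<times> nat) set \<Rightarrow> nat \<Rightarrow> (real \<times> real) set" where
  "gsc_Q N D 0 = {0..1} \<times> {0..1}"
| "gsc_Q N D (Suc n) = (\<Union>i\<in>D. gsc_map N i ` gsc_Q N D n)"

definition gsc_attractor :: "nat \<Rightarrow> (nat \<times> nat) set \<Rightarrow> (real \<times> real) set \<Rightarrow> bool" where
  "gsc_attractor N D F \<longleftrightarrow> F \<noteq> {} \<and> compact F \<and> F = (\<Union>i\<in>D. gsc_map N i ` F)"

end

theory Submission
  imports Defs
begin

text \<open>
  Every point of \<open>Q\<^sub>n\<close> lies in a connected subset of \<open>Q\<^sub>n\<close> of diameter at most \<open>2 N\<^sup>-\<^sup>n\<close>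
  that meets \<open>F\<close> (an image of \<open>Q\<^sub>0\<close> under \<open>n\<close> of the maps \<open>\<phi>\<^sub>i\<close>); hence \<open>F = \<Inter>\<^sub>n Q\<^sub>n\<close>, and
  connectedness of \<open>F\<close> passes to every \<open>Q\<^sub>n\<close>. Conversely, \<open>Q\<^sub>n\<^sub>+\<^sub>1\<close> is the union of the connected
  pieces \<open>\<phi>\<^sub>i(Q\<^sub>n)\<close>, and \<open>\<phi>\<^sub>i(Q\<^sub>n)\<close> meets \<open>\<phi>\<^sub>j(Q\<^sub>n)\<close> iff \<open>Q\<^sub>n\<close> meets its translate by \<open>i - j\<close>.
  A translation \<open>t\<close> with this property lies in \<open>{-1,0,1}\<^sup>2\<close>, and \<open>Q\<^sub>n\<^sub>+\<^sub>1\<close> meets its translate by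
  \<open>t\<close> iff \<open>Q\<^sub>n\<close> meets its translate by \<open>N t + k - l\<close> for some \<open>k, l \<in> D\<close>; since \<open>\<bar>k - l\<bar> < N\<close>,
  this step keeps every nonzero coordinate of \<open>t\<close>. So two steps starting at level 2 cannot both
  change \<open>t \<noteq> 0\<close>, and which translates \<open>Q\<^sub>n\<close> meets is the same for all \<open>n \<ge> 2\<close>. The pieces of
  \<open>Q\<^sub>n\<^sub>+\<^sub>1\<close> therefore intersect in the same pattern as those of \<open>Q\<^sub>3\<close>, so connectedness of \<open>Q\<^sub>3\<close>
  propagates to all \<open>Q\<^sub>n\<close> with \<open>n \<ge> 3\<close> and to their nested intersection \<open>F\<close>.
\<close>

lemma gsc_map_eq_scaleR: "gsc_map N i x = (1 / real N) *\<^sub>R (x + (real (fst i), real (snd i)))"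
  by (cases x) (simp add: gsc_map_def divide_inverse_commute)

lemma continuous_on_gsc_map: "continuous_on S (gsc_map N i)"
  unfolding gsc_map_eq_scaleR[abs_def] by (intro continuous_intros)

lemma dist_gsc_map:
  assumes "N > 0"
  shows "dist (gsc_map N i x) (gsc_map N i y) = dist x y / real N"
proof -
  have "gsc_map N i x - gsc_map N i y = (1 / real N) *\<^sub>R (x - y)"
    unfolding gsc_map_eq_scaleR by (simp add: algebra_simps)
  then show ?thesis
    using assms by (simp add: dist_norm)
qed

lemma gsc_data_ge_2: "gsc_data N D \<Longrightarrow> 2 \<le> N"
  unfolding gsc_data_def by simp

lemma gsc_data_finite: "gsc_data N D \<Longrightarrow> finite D"
  unfolding gsc_data_def by (metis card.infinite not_one_less_zero)

lemma gsc_data_nonempty: "gsc_data N D \<Longrightarrow> D \<noteq> {}"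
  unfolding gsc_data_def by auto

lemma gsc_data_digits: "gsc_data N D \<Longrightarrow> i \<in> D \<Longrightarrow> fst i < N \<and> snd i < N"
  unfolding gsc_data_def by auto

lemma gsc_attractor_invariant: "gsc_attractor N D F \<Longrightarrow> i \<in> D \<Longrightarrow> gsc_map N i ` F \<subseteq> F"
  unfolding gsc_attractor_def by blast

lemma compact_gsc_Q: "finite D \<Longrightarrow> compact (gsc_Q N D n)"
  by (induction n) (auto simp: compact_Times intro!: compact_UN compact_continuous_image continuous_on_gsc_map)

lemma gsc_Q_nonempty: "D \<noteq> {} \<Longrightarrow> gsc_Q N D n \<noteq> {}"
  by (induction n) auto

lemma gsc_map_unit_square:
  assumes "gsc_data N D" "i \<in> D" "x \<in> {0..1} \<times> {0..1}"
  shows "gsc_map N i x \<in> {0..1} \<times> {0..1}"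
proof -
  have "2 \<le> N" "real (fst i) \<le> real N - 1" "real (snd i) \<le> real N - 1"
    using gsc_data_ge_2[OF assms(1)] gsc_data_digits[OF assms(1,2)] by linarith+
  with assms(3) show ?thesis
    by (auto simp: gsc_map_def mem_Times_iff field_simps)
qed

lemma gsc_Q_Suc_subset: "gsc_data N D \<Longrightarrow> gsc_Q N D (Suc n) \<subseteq> gsc_Q N D n"
proof (induction n)
  case 0
  show ?case
  proof
    fix x assume "x \<in> gsc_Q N D (Suc 0)"
    then obtain i y where "i \<in> D" "y \<in> {0..1} \<times> {0..1}" "x = gsc_map N i y"
      by auto
    then show "x \<in> gsc_Q N D 0"
      using gsc_map_unit_square[OF 0] by simp
  qed
next
  case (Suc n)
  then show ?case
    by (simp only: gsc_Q.simps) blast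
qed

lemma gsc_Q_antimono: "gsc_data N D \<Longrightarrow> m \<le> n \<Longrightarrow> gsc_Q N D n \<subseteq> gsc_Q N D m"
  using lift_Suc_antimono_le[of "gsc_Q N D"] gsc_Q_Suc_subset by metis

lemma gsc_Q_subset_unit_square: "gsc_data N D \<Longrightarrow> gsc_Q N D n \<subseteq> {0..1} \<times> {0..1}"
  using gsc_Q_antimono[of N D 0 n] by simp

lemma invariant_function_in_unit_interval:
  fixes g :: "real \<times> real \<Rightarrow> real" and h :: "nat \<times> nat \<Rightarrow> nat"
  assumes N: "N \<ge> 2" and F: "compact F" "F \<noteq> {}" "F = (\<Union>i\<in>D. gsc_map N i ` F)"
    and g: "continuous_on F g"
    and g_gsc_map: "\<And>i y. i \<in> D \<Longrightarrow> g (gsc_map N i y) = (g y + real (h i)) / real N"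
    and h: "\<And>i. i \<in> D \<Longrightarrow> h i < N"
    and x: "x \<in> F"
  shows "0 \<le> g x \<and> g x \<le> 1"
proof -
  obtain a where a: "a \<in> F" "\<And>y. y \<in> F \<Longrightarrow> g y \<le> g a"
    using continuous_attains_sup[OF F(1,2) g] by blast
  obtain b where b: "b \<in> F" "\<And>y. y \<in> F \<Longrightarrow> g b \<le> g y"
    using continuous_attains_inf[OF F(1,2) g] by blast
  obtain i y where iy: "i \<in> D" "y \<in> F" "a = gsc_map N i y"
    using a(1) F(3) by blast
  have "g a = (g y + real (h i)) / real N" "g y \<le> g a" "real (h i) \<le> real N - 1"
    using g_gsc_map[OF iy(1)] a(2)[OF iy(2)] h[OF iy(1)] iy(3) by auto
  then have "(g a - 1) * (real N - 1) \<le> 0"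
    using N by (simp add: field_simps)
  then have "g a \<le> 1"
    using N by (simp add: mult_le_0_iff)
  obtain j z where jz: "j \<in> D" "z \<in> F" "b = gsc_map N j z"
    using b(1) F(3) by blast
  have "g b = (g z + real (h j)) / real N" "g b \<le> g z"
    using g_gsc_map[OF jz(1)] b(2)[OF jz(2)] jz(3) by auto
  then have "g b * (real N - 1) \<ge> 0"
    using N by (simp add: field_simps)
  then have "g b \<ge> 0"
    using N by (simp add: zero_le_mult_iff)
  show ?thesis
    using a(2)[OF x] b(2)[OF x] \<open>g a \<le> 1\<close> \<open>g b \<ge> 0\<close> by linarith
qed

lemma gsc_attractor_subset_unit_square:
  assumes "gsc_data N D" "gsc_attractor N D F"
  shows "F \<subseteq> {0..1} \<times> {0..1}"
proof
  fix x assume x: "x \<in> F"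
  have N: "N \<ge> 2"
    using gsc_data_ge_2[OF assms(1)] .
  have F: "compact F" "F \<noteq> {}" "F = (\<Union>i\<in>D. gsc_map N i ` F)"
    using assms(2) unfolding gsc_attractor_def by auto
  have "0 \<le> fst x \<and> fst x \<le> 1"
    using gsc_data_digits[OF assms(1)]
    by (intro invariant_function_in_unit_interval[OF N F _ _ _ x, where h = fst])
      (simp_all add: gsc_map_def continuous_on_fst continuous_on_id)
  moreover have "0 \<le> snd x \<and> snd x \<le> 1"
    using gsc_data_digits[OF assms(1)]
    by (intro invariant_function_in_unit_interval[OF N F _ _ _ x, where h = snd])
      (simp_all add: gsc_map_def continuous_on_snd continuous_on_id)
  ultimately show "x \<in> {0..1} \<times> {0..1}"
    by (simp add: mem_Times_iff)
qed

lemma gsc_attractor_subset_gsc_Q: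
  assumes "gsc_data N D" "gsc_attractor N D F"
  shows "F \<subseteq> gsc_Q N D n"
proof (induction n)
  case 0
  then show ?case
    using gsc_attractor_subset_unit_square[OF assms] by simp
next
  case (Suc n)
  have "F = (\<Union>i\<in>D. gsc_map N i ` F)"
    using assms(2) unfolding gsc_attractor_def by auto
  also have "\<dots> \<subseteq> (\<Union>i\<in>D. gsc_map N i ` gsc_Q N D n)"
    using Suc.IH by blast
  finally show ?case
    by simp
qed

lemma dist_unit_square_le_2:
  assumes "x \<in> {0..1::real} \<times> {0..1::real}" "y \<in> {0..1::real} \<times> {0..1::real}"
  shows "dist x y \<le> 2"
proof -
  have "dist x y \<le> \<bar>dist (fst x) (fst y)\<bar> + \<bar>dist (snd x) (snd y)\<bar>"
    by (metis dist_Pair_Pair prod.collapse sqrt_sum_squares_le_sum_abs)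
  also have "\<dots> \<le> 2"
    using assms by (auto simp: dist_real_def mem_Times_iff)
  finally show ?thesis .
qed

lemma gsc_Q_cell:
  assumes "gsc_data N D" "gsc_attractor N D F" "x \<in> gsc_Q N D n"
  shows "\<exists>C. connected C \<and> x \<in> C \<and> C \<subseteq> gsc_Q N D n \<and> C \<inter> F \<noteq> {} \<and> C \<subseteq> cball x (2 / real N ^ n)"
  using assms(3)
proof (induction n arbitrary: x)
  case 0
  have "connected (gsc_Q N D 0)"
    by (simp add: convex_connected convex_Times)
  moreover have "gsc_Q N D 0 \<inter> F \<noteq> {}"
    using gsc_attractor_subset_gsc_Q[OF assms(1,2)] assms(2) unfolding gsc_attractor_def by blast
  moreover have "gsc_Q N D 0 \<subseteq> cball x (2 / real N ^ 0)"
    using 0 dist_unit_square_le_2 by (auto simp: subset_iff)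
  ultimately show ?case
    using 0 by blast
next
  case (Suc n)
  have N: "N > 0"
    using gsc_data_ge_2[OF assms(1)] by simp
  obtain i y where iy: "i \<in> D" "y \<in> gsc_Q N D n" "x = gsc_map N i y"
    using Suc.prems by auto
  obtain C where C: "connected C" "y \<in> C" "C \<subseteq> gsc_Q N D n" "C \<inter> F \<noteq> {}"
      "C \<subseteq> cball y (2 / real N ^ n)"
    using Suc.IH[OF iy(2)] by blast
  show ?case
  proof (intro exI conjI)
    show "connected (gsc_map N i ` C)"
      using C(1) by (intro connected_continuous_image continuous_on_gsc_map)
    show "x \<in> gsc_map N i ` C"
      using iy(3) C(2) by blast
    show "gsc_map N i ` C \<subseteq> gsc_Q N D (Suc n)"
      using iy(1) C(3) by auto
    show "gsc_map N i ` C \<inter> F \<noteq> {}"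
      using C(4) gsc_attractor_invariant[OF assms(2) iy(1)] by blast
    show "gsc_map N i ` C \<subseteq> cball x (2 / real N ^ Suc n)"
    proof
      fix w assume "w \<in> gsc_map N i ` C"
      then obtain z where z: "z \<in> C" "w = gsc_map N i z"
        by blast
      have "dist x w = dist y z / real N"
        using iy(3) z(2) dist_gsc_map[OF N] by simp
      also have "\<dots> \<le> (2 / real N ^ n) / real N"
        using C(5) z(1) N by (intro divide_right_mono) auto
      finally show "w \<in> cball x (2 / real N ^ Suc n)"
        by (simp add: mult.commute)
    qed
  qed
qed

lemma gsc_attractor_eq_Inter_gsc_Q:
  assumes d: "gsc_data N D" and F: "gsc_attractor N D F"
  shows "F = (\<Inter>n. gsc_Q N D (n + k))"
proof
  show "F \<subseteq> (\<Inter>n. gsc_Q N D (n + k))"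
    using gsc_attractor_subset_gsc_Q[OF d F] by blast
next
  show "(\<Inter>n. gsc_Q N D (n + k)) \<subseteq> F"
  proof
    fix x assume x: "x \<in> (\<Inter>n. gsc_Q N D (n + k))"
    have N: "N \<ge> 2"
      using gsc_data_ge_2[OF d] .
    have "\<exists>y\<in>F. dist y x < e" if e: "e > 0" for e
    proof -
      obtain m where m: "(1 / real N) ^ m < e / 2"
        using real_arch_pow_inv[of "e / 2" "1 / real N"] e N by auto
      obtain C where C: "C \<inter> F \<noteq> {}" "C \<subseteq> cball x (2 / real N ^ (m + k))"
        using gsc_Q_cell[OF d F, of x "m + k"] x by blast
      then obtain y where y: "y \<in> F" "dist y x \<le> 2 / real N ^ (m + k)"
        by (force simp: subset_iff dist_commute)
      have "2 / real N ^ (m + k) \<le> 2 / real N ^ m"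
        using N by (intro divide_left_mono power_increasing) auto
      also have "\<dots> < e"
        using m by (simp add: power_one_over)
      finally show ?thesis
        using y by force
    qed
    moreover have "closed F"
      using F unfolding gsc_attractor_def by (simp add: compact_imp_closed)
    ultimately show "x \<in> F"
      using closed_approachable by blast
  qed
qed

lemma connected_gsc_Q_if_connected_attractor:
  assumes d: "gsc_data N D" and F: "gsc_attractor N D F" and conn: "connected F"
  shows "connected (gsc_Q N D n)"
proof -
  let ?Q = "gsc_Q N D n"
  have "\<forall>x\<in>?Q. \<exists>C. connected C \<and> x \<in> C \<and> C \<subseteq> ?Q \<and> C \<inter> F \<noteq> {}"
  proof
    fix x assume "x \<in> ?Q"
    from gsc_Q_cell[OF d F this] show "\<exists>C. connected C \<and> x \<in> C \<and> C \<subseteq> ?Q \<and> C \<inter> F \<noteq> {}"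
      by (elim exE conjE) blast
  qed
  then obtain cell where cell: "\<forall>x\<in>?Q. connected (cell x) \<and> x \<in> cell x \<and> cell x \<subseteq> ?Q \<and> cell x \<inter> F \<noteq> {}"
    by (rule bchoice[THEN exE])
  have "?Q = (\<Union>x\<in>?Q. cell x \<union> F)"
  proof
    show "?Q \<subseteq> (\<Union>x\<in>?Q. cell x \<union> F)"
      using cell by blast
    show "(\<Union>x\<in>?Q. cell x \<union> F) \<subseteq> ?Q"
      using cell gsc_attractor_subset_gsc_Q[OF d F] by blast
  qed
  moreover have "connected (\<Union>x\<in>?Q. cell x \<union> F)"
  proof (rule connected_Union)
    show "connected S" if S: "S \<in> (\<lambda>x. cell x \<union> F) ` ?Q" for S
    proof -
      obtain x where "x \<in> ?Q" "S = cell x \<union> F"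
        using S by blast
      then show ?thesis
        using cell conn connected_Un[of "cell x" F] by blast
    qed
    show "\<Inter> ((\<lambda>x. cell x \<union> F) ` ?Q) \<noteq> {}"
      using F unfolding gsc_attractor_def by blast
  qed
  ultimately show ?thesis
    by simp
qed

definition gsc_Q_meets_shift :: "nat \<Rightarrow> (nat \<times> nat) set \<Rightarrow> nat \<Rightarrow> int \<Rightarrow> int \<Rightarrow> bool" where
  "gsc_Q_meets_shift N D n a b \<longleftrightarrow>
     (\<exists>x\<in>gsc_Q N D n. (fst x + of_int a, snd x + of_int b) \<in> gsc_Q N D n)"

lemma gsc_map_images_meet_iff:
  assumes "N > 0"
  shows "gsc_map N i ` gsc_Q N D n \<inter> gsc_map N j ` gsc_Q N D n \<noteq> {} \<longleftrightarrow>
    gsc_Q_meets_shift N D n (int (fst i) - int (fst j)) (int (snd i) - int (snd j))"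
proof
  assume "gsc_map N i ` gsc_Q N D n \<inter> gsc_map N j ` gsc_Q N D n \<noteq> {}"
  then obtain y z where yz: "y \<in> gsc_Q N D n" "z \<in> gsc_Q N D n" "gsc_map N i y = gsc_map N j z"
    by blast
  then have "z = (fst y + of_int (int (fst i) - int (fst j)), snd y + of_int (int (snd i) - int (snd j)))"
    using assms by (cases y, cases z) (auto simp: gsc_map_def field_simps)
  with yz show "gsc_Q_meets_shift N D n (int (fst i) - int (fst j)) (int (snd i) - int (snd j))"
    unfolding gsc_Q_meets_shift_def by metis
next
  assume "gsc_Q_meets_shift N D n (int (fst i) - int (fst j)) (int (snd i) - int (snd j))"
  then obtain y where y: "y \<in> gsc_Q N D n"
    "(fst y + of_int (int (fst i) - int (fst j)), snd y + of_int (int (snd i) - int (snd j))) \<in> gsc_Q N D n"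
    unfolding gsc_Q_meets_shift_def by blast
  moreover have "gsc_map N i y =
      gsc_map N j (fst y + of_int (int (fst i) - int (fst j)), snd y + of_int (int (snd i) - int (snd j)))"
    using assms by (simp add: gsc_map_def field_simps)
  ultimately show "gsc_map N i ` gsc_Q N D n \<inter> gsc_map N j ` gsc_Q N D n \<noteq> {}"
    by blast
qed

lemma gsc_Q_meets_shift_Suc_iff:
  assumes N: "N > 0"
  shows "gsc_Q_meets_shift N D (Suc n) a b \<longleftrightarrow> (\<exists>i\<in>D. \<exists>j\<in>D.
     gsc_Q_meets_shift N D n (int N * a + int (fst i) - int (fst j)) (int N * b + int (snd i) - int (snd j)))"
proof
  assume "gsc_Q_meets_shift N D (Suc n) a b"
  then obtain x where x: "x \<in> gsc_Q N D (Suc n)" "(fst x + of_int a, snd x + of_int b) \<in> gsc_Q N D (Suc n)"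
    unfolding gsc_Q_meets_shift_def by blast
  from x(1) obtain i y where iy: "i \<in> D" "y \<in> gsc_Q N D n" "x = gsc_map N i y"
    by auto
  from x(2) obtain j z where jz: "j \<in> D" "z \<in> gsc_Q N D n" "(fst x + of_int a, snd x + of_int b) = gsc_map N j z"
    by auto
  have "z = (fst y + of_int (int N * a + int (fst i) - int (fst j)), snd y + of_int (int N * b + int (snd i) - int (snd j)))"
    using iy(3) jz(3) N by (cases z) (auto simp: gsc_map_def field_simps)
  with iy jz show "\<exists>i\<in>D. \<exists>j\<in>D.
     gsc_Q_meets_shift N D n (int N * a + int (fst i) - int (fst j)) (int N * b + int (snd i) - int (snd j))"
    unfolding gsc_Q_meets_shift_def by metis
next
  assume "\<exists>i\<in>D. \<exists>j\<in>D.
     gsc_Q_meets_shift N D n (int N * a + int (fst i) - int (fst j)) (int N * b + int (snd i) - int (snd j))"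
  then obtain i j y where ij: "i \<in> D" "j \<in> D" "y \<in> gsc_Q N D n"
    and z: "(fst y + of_int (int N * a + int (fst i) - int (fst j)), snd y + of_int (int N * b + int (snd i) - int (snd j))) \<in> gsc_Q N D n"
      (is "?z \<in> _")
    unfolding gsc_Q_meets_shift_def by blast
  have "gsc_map N j ?z = (fst (gsc_map N i y) + of_int a, snd (gsc_map N i y) + of_int b)"
    unfolding gsc_map_def using N by (simp add: field_simps)
  moreover have "gsc_map N i y \<in> gsc_Q N D (Suc n)" "gsc_map N j ?z \<in> gsc_Q N D (Suc n)"
    using ij z by auto
  ultimately show "gsc_Q_meets_shift N D (Suc n) a b"
    unfolding gsc_Q_meets_shift_def by metis
qed

lemma gsc_Q_meets_shift_bounded:
  assumes "gsc_data N D" "gsc_Q_meets_shift N D n a b"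
  shows "\<bar>a\<bar> \<le> 1 \<and> \<bar>b\<bar> \<le> 1"
proof -
  obtain x where "x \<in> gsc_Q N D n" "(fst x + of_int a, snd x + of_int b) \<in> gsc_Q N D n"
    using assms(2) unfolding gsc_Q_meets_shift_def by blast
  then have "x \<in> {0..1} \<times> {0..1}" "(fst x + of_int a, snd x + of_int b) \<in> {0..1::real} \<times> {0..1::real}"
    using gsc_Q_subset_unit_square[OF assms(1)] by blast+
  then have "\<bar>(of_int a::real)\<bar> \<le> 1 \<and> \<bar>(of_int b::real)\<bar> \<le> 1"
    by (auto simp: mem_Times_iff)
  then show ?thesis
    by linarith
qed

lemma gsc_Q_meets_shift_0:
  assumes "\<bar>a\<bar> \<le> 1" "\<bar>b\<bar> \<le> 1"
  shows "gsc_Q_meets_shift N D 0 a b"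
proof -
  define x :: "real \<times> real" where "x = (if a < 0 then 1 else 0, if b < 0 then 1 else 0)"
  have "a = -1 \<or> a = 0 \<or> a = 1" "b = -1 \<or> b = 0 \<or> b = 1"
    using assms by linarith+
  then have "x \<in> gsc_Q N D 0" "(fst x + of_int a, snd x + of_int b) \<in> gsc_Q N D 0"
    unfolding x_def by auto
  then show ?thesis
    unfolding gsc_Q_meets_shift_def by blast
qed

lemma gsc_Q_meets_shift_zero: "D \<noteq> {} \<Longrightarrow> gsc_Q_meets_shift N D n 0 0"
  using gsc_Q_nonempty[of D N n] unfolding gsc_Q_meets_shift_def by auto

lemma gsc_Q_meets_shift_fixed_point:
  assumes N: "N > 0" and ij: "i \<in> D" "j \<in> D"
    and fixed: "int N * a + int (fst i) - int (fst j) = a" "int N * b + int (snd i) - int (snd j) = b"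
    and ab: "\<bar>a\<bar> \<le> 1" "\<bar>b\<bar> \<le> 1"
  shows "gsc_Q_meets_shift N D n a b"
proof (induction n)
  case 0
  then show ?case
    using gsc_Q_meets_shift_0 ab by blast
next
  case (Suc n)
  then show ?case
    unfolding gsc_Q_meets_shift_Suc_iff[OF N] using ij fixed by metis
qed

lemma int_unit_step_fixed:
  fixes a c n :: int
  assumes "\<bar>a\<bar> \<le> 1" "\<bar>n * a + c\<bar> \<le> 1" "\<bar>c\<bar> < n" "a \<noteq> 0"
  shows "n * a + c = a"
proof -
  have "a = 1 \<or> a = -1"
    using assms by linarith
  then show ?thesis
    using assms by auto
qed

lemma gsc_Q_meets_shift_SucE:
  assumes d: "gsc_data N D" and p: "gsc_Q_meets_shift N D (Suc n) a b"
  obtains i j where "i \<in> D" "j \<in> D"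
    "gsc_Q_meets_shift N D n (int N * a + int (fst i) - int (fst j)) (int N * b + int (snd i) - int (snd j))"
    "a \<noteq> 0 \<Longrightarrow> int N * a + int (fst i) - int (fst j) = a"
    "b \<noteq> 0 \<Longrightarrow> int N * b + int (snd i) - int (snd j) = b"
proof -
  have N: "N > 0"
    using gsc_data_ge_2[OF d] by simp
  obtain i j where ij: "i \<in> D" "j \<in> D"
    and p': "gsc_Q_meets_shift N D n (int N * a + int (fst i) - int (fst j)) (int N * b + int (snd i) - int (snd j))"
    using p gsc_Q_meets_shift_Suc_iff[OF N] by blast
  have "fst i < N" "fst j < N" "snd i < N" "snd j < N"
    using gsc_data_digits[OF d] ij by auto
  then have c: "\<bar>int (fst i) - int (fst j)\<bar> < int N" "\<bar>int (snd i) - int (snd j)\<bar> < int N"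
    by linarith+
  have ab: "\<bar>a\<bar> \<le> 1" "\<bar>b\<bar> \<le> 1"
    using gsc_Q_meets_shift_bounded[OF d p] by auto
  have u: "\<bar>int N * a + (int (fst i) - int (fst j))\<bar> \<le> 1" "\<bar>int N * b + (int (snd i) - int (snd j))\<bar> \<le> 1"
    using gsc_Q_meets_shift_bounded[OF d p'] by (auto simp: add_diff_eq)
  show ?thesis
    using that[OF ij p'] int_unit_step_fixed[OF ab(1) u(1) c(1)] int_unit_step_fixed[OF ab(2) u(2) c(2)]
    by (simp add: add_diff_eq)
qed

lemma gsc_Q_meets_shift_2_imp_3:
  assumes d: "gsc_data N D" and p: "gsc_Q_meets_shift N D 2 a b"
  shows "gsc_Q_meets_shift N D 3 a b"
proof -
  have N: "N > 0"
    using gsc_data_ge_2[OF d] by simp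
  have ab: "\<bar>a\<bar> \<le> 1" "\<bar>b\<bar> \<le> 1"
    using gsc_Q_meets_shift_bounded[OF d p] by auto
  obtain i j where ij: "i \<in> D" "j \<in> D"
    and p1: "gsc_Q_meets_shift N D 1 (int N * a + int (fst i) - int (fst j)) (int N * b + int (snd i) - int (snd j))"
    and u: "a \<noteq> 0 \<Longrightarrow> int N * a + int (fst i) - int (fst j) = a"
      "b \<noteq> 0 \<Longrightarrow> int N * b + int (snd i) - int (snd j) = b"
    using p unfolding Suc_1[symmetric] by (elim gsc_Q_meets_shift_SucE[OF d]) blast
  define u1 u2 where "u1 = int N * a + int (fst i) - int (fst j)" and "u2 = int N * b + int (snd i) - int (snd j)"
  have u12: "\<bar>u1\<bar> \<le> 1" "\<bar>u2\<bar> \<le> 1"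
    using gsc_Q_meets_shift_bounded[OF d p1[folded u1_def u2_def]] by auto
  obtain i' j' where ij': "i' \<in> D" "j' \<in> D"
    and v: "u1 \<noteq> 0 \<Longrightarrow> int N * u1 + int (fst i') - int (fst j') = u1"
      "u2 \<noteq> 0 \<Longrightarrow> int N * u2 + int (snd i') - int (snd j') = u2"
    using p1[folded u1_def u2_def] unfolding One_nat_def by (elim gsc_Q_meets_shift_SucE[OF d]) blast
  consider "u1 = a \<and> u2 = b"
    | "int N * u1 + int (fst i') - int (fst j') = u1 \<and> int N * u2 + int (snd i') - int (snd j') = u2"
    | "a = 0 \<and> b = 0"
    using u v unfolding u1_def u2_def by linarith
  then show ?thesis
  proof cases
    case 1
    then show ?thesis
      using gsc_Q_meets_shift_fixed_point[OF N ij _ _ ab] unfolding u1_def u2_def by blast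
  next
    case 2
    then have "gsc_Q_meets_shift N D 2 u1 u2"
      using gsc_Q_meets_shift_fixed_point[OF N ij' _ _ u12] by blast
    then have "gsc_Q_meets_shift N D (Suc 2) a b"
      unfolding gsc_Q_meets_shift_Suc_iff[OF N] u1_def u2_def using ij by blast
    then show ?thesis
      by (simp add: numeral_3_eq_3)
  next
    case 3
    then show ?thesis
      using gsc_Q_meets_shift_zero[OF gsc_data_nonempty[OF d]] by simp
  qed
qed

lemma gsc_Q_meets_shift_stable:
  assumes d: "gsc_data N D" and n: "2 \<le> n"
  shows "gsc_Q_meets_shift N D n a b \<longleftrightarrow> gsc_Q_meets_shift N D 2 a b"
  using n
proof (induction n arbitrary: a b rule: nat_induct_at_least)
  case base
  then show ?case
    by simp
next
  case (Suc n)
  have N: "N > 0"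
    using gsc_data_ge_2[OF d] by simp
  have "gsc_Q_meets_shift N D (Suc n) a b \<longleftrightarrow> gsc_Q_meets_shift N D (Suc 2) a b"
    unfolding gsc_Q_meets_shift_Suc_iff[OF N] using Suc.IH by simp
  also have "\<dots> \<longleftrightarrow> gsc_Q_meets_shift N D 2 a b"
  proof
    assume "gsc_Q_meets_shift N D (Suc 2) a b"
    then show "gsc_Q_meets_shift N D 2 a b"
      using gsc_Q_Suc_subset[OF d, of 2] unfolding gsc_Q_meets_shift_def by blast
  next
    assume "gsc_Q_meets_shift N D 2 a b"
    then show "gsc_Q_meets_shift N D (Suc 2) a b"
      using gsc_Q_meets_shift_2_imp_3[OF d] by (simp add: numeral_3_eq_3)
  qed
  finally show ?case .
qed

text \<open>The pieces \<open>B i\<close> of a disconnection of \<open>\<Union>B\<close> fall into two groups with pairwise disjoint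
  members; the corresponding groups of \<open>A i\<close> are then disjoint closed sets covering \<open>\<Union>A\<close>.\<close>

lemma connected_UN_by_comparison:
  fixes A B :: "'i \<Rightarrow> 'a::topological_space set"
  assumes fin: "finite I"
    and closed_A: "\<And>i. i \<in> I \<Longrightarrow> closed (A i)"
    and nonempty_A: "\<And>i. i \<in> I \<Longrightarrow> A i \<noteq> {}"
    and connected_B: "\<And>i. i \<in> I \<Longrightarrow> connected (B i)"
    and disjoint: "\<And>i j. i \<in> I \<Longrightarrow> j \<in> I \<Longrightarrow> B i \<inter> B j = {} \<Longrightarrow> A i \<inter> A j = {}"
    and connected_A: "connected (\<Union>i\<in>I. A i)"
  shows "connected (\<Union>i\<in>I. B i)"
  unfolding connected_closed
proof
  assume "\<exists>U V. closed U \<and> closed V \<and> (\<Union>i\<in>I. B i) \<subseteq> U \<union> V \<and> U \<inter> V \<inter> (\<Union>i\<in>I. B i) = {}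
    \<and> U \<inter> (\<Union>i\<in>I. B i) \<noteq> {} \<and> V \<inter> (\<Union>i\<in>I. B i) \<noteq> {}"
  then obtain U V where UV: "closed U" "closed V" "(\<Union>i\<in>I. B i) \<subseteq> U \<union> V"
      "U \<inter> V \<inter> (\<Union>i\<in>I. B i) = {}" "U \<inter> (\<Union>i\<in>I. B i) \<noteq> {}" "V \<inter> (\<Union>i\<in>I. B i) \<noteq> {}"
    by blast
  have B_side: "B i \<subseteq> U \<or> B i \<subseteq> V" if "i \<in> I" for i
    using connected_closedD[OF connected_B[OF that], of U V] UV(1-4) that by blast
  define K where "K = {i \<in> I. B i \<subseteq> U}"
  have "A i \<inter> A j = {}" if "i \<in> K" "j \<in> I - K" for i j
  proof -
    have "B i \<subseteq> U" "B j \<subseteq> V" "i \<in> I" "j \<in> I"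
      using that B_side unfolding K_def by auto
    then show ?thesis
      using disjoint UV(4) by blast
  qed
  then have separated: "(\<Union>i\<in>K. A i) \<inter> (\<Union>i\<in>I - K. A i) \<inter> (\<Union>i\<in>I. A i) = {}"
    by blast
  have cover: "(\<Union>i\<in>I. A i) \<subseteq> (\<Union>i\<in>K. A i) \<union> (\<Union>i\<in>I - K. A i)"
    by blast
  have "closed (\<Union>i\<in>K. A i)" "closed (\<Union>i\<in>I - K. A i)"
    using fin closed_A unfolding K_def by (auto intro!: closed_UN)
  note side = connected_closedD[OF connected_A separated cover this]
  obtain i x where "i \<in> I" "x \<in> B i" "x \<in> U"
    using UV(5) by blast
  then have "i \<in> K"
    using B_side[of i] UV(4) unfolding K_def by blast
  moreover obtain j y where "j \<in> I" "y \<in> B j" "y \<in> V"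
    using UV(6) by blast
  then have "j \<in> I - K"
    using UV(4) unfolding K_def by blast
  ultimately have "(\<Union>i\<in>K. A i) \<inter> (\<Union>i\<in>I. A i) \<noteq> {}" "(\<Union>i\<in>I - K. A i) \<inter> (\<Union>i\<in>I. A i) \<noteq> {}"
    using nonempty_A unfolding K_def by blast+
  with side show False
    by blast
qed

lemma connected_gsc_Q_if_connected_gsc_Q_3:
  assumes d: "gsc_data N D" and conn: "connected (gsc_Q N D 3)" and n: "3 \<le> n"
  shows "connected (gsc_Q N D n)"
  using n
proof (induction n rule: nat_induct_at_least)
  case base
  then show ?case
    using conn by simp
next
  case (Suc n)
  have N: "N > 0"
    using gsc_data_ge_2[OF d] by simp
  have "connected (\<Union>i\<in>D. gsc_map N i ` gsc_Q N D n)"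
  proof (rule connected_UN_by_comparison[where A = "\<lambda>i. gsc_map N i ` gsc_Q N D 2"])
    show "finite D"
      using gsc_data_finite[OF d] .
    show "closed (gsc_map N i ` gsc_Q N D 2)" for i
      by (intro compact_imp_closed compact_continuous_image continuous_on_gsc_map
          compact_gsc_Q gsc_data_finite[OF d])
    show "gsc_map N i ` gsc_Q N D 2 \<noteq> {}" for i
      using gsc_Q_nonempty[OF gsc_data_nonempty[OF d]] by simp
    show "connected (gsc_map N i ` gsc_Q N D n)" for i
      by (intro connected_continuous_image continuous_on_gsc_map Suc.IH)
    show "gsc_map N i ` gsc_Q N D 2 \<inter> gsc_map N j ` gsc_Q N D 2 = {}"
      if "gsc_map N i ` gsc_Q N D n \<inter> gsc_map N j ` gsc_Q N D n = {}" for i j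
    proof -
      have "2 \<le> n"
        using Suc.hyps by simp
      moreover have "\<not> gsc_Q_meets_shift N D n (int (fst i) - int (fst j)) (int (snd i) - int (snd j))"
        using that gsc_map_images_meet_iff[OF N, of i D n j] by blast
      ultimately have "\<not> gsc_Q_meets_shift N D 2 (int (fst i) - int (fst j)) (int (snd i) - int (snd j))"
        using gsc_Q_meets_shift_stable[OF d] by blast
      then show ?thesis
        using gsc_map_images_meet_iff[OF N, of i D 2 j] by blast
    qed
    show "connected (\<Union>i\<in>D. gsc_map N i ` gsc_Q N D 2)"
      using conn gsc_Q.simps(2)[of N D 2] by simp
  qed
  then show ?case
    by simp
qed

theorem mainTheorem8:
  fixes N :: nat and D :: "(nat \<times> nat) set" and F :: "(real \<times> real) set"
  assumes "gsc_data N D"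
    and "gsc_attractor N D F"
  shows "connected F \<longleftrightarrow> connected (gsc_Q N D 3)"
proof
  assume "connected F"
  then show "connected (gsc_Q N D 3)"
    using connected_gsc_Q_if_connected_attractor[OF assms] by blast
next
  assume conn: "connected (gsc_Q N D 3)"
  have "connected (\<Inter>n. gsc_Q N D (n + 3))"
  proof (rule connected_nest)
    show "compact (gsc_Q N D (n + 3))" for n
      using compact_gsc_Q[OF gsc_data_finite[OF assms(1)]] .
    show "connected (gsc_Q N D (n + 3))" for n
      using connected_gsc_Q_if_connected_gsc_Q_3[OF assms(1) conn] by simp
    show "gsc_Q N D (n + 3) \<subseteq> gsc_Q N D (m + 3)" if "m \<le> n" for m n
      using gsc_Q_antimono[OF assms(1)] that by simp
  qed
  then show "connected F"
    using gsc_attractor_eq_Inter_gsc_Q[OF assms, of 3] by simp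
qed

end
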